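(* Let $\mathcal H$ be an infinite-dimensional complex Hilbert space and $D\subseteq\mathcal H$ a dense linear subspace. Let $\mathcal V_{fD}(\mathcal H)=\{t\in\mathcal V_f(\mathcal H)\mid t\text{ is bounded, or }D(t)=D\}$. Then $\mathcal V_{fD}(\mathcal H)$ is a sub-generalized effect algebra of $(\mathcal V_f(\mathcal H);\oplus,o)$, the operation $\oplus_{|\mathcal V_{fD}(\mathcal H)}$ is total, and $(\mathcal V_{fD}(\mathcal H);\oplus_{|\mathcal V_{fD}(\mathcal H)},o)$ is monotone Dedekind upwards and downwards $\sigma$-complete.
   Context: Bilinear forms $t$ on $\mathcal H$ are sesquilinear maps $D(t)\times D(t)\to\mathbb C$ on a dense linear subspace $D(t)$ (linear in the first argument); $t$ is positive if $t(x,x)\ge0$ on $D(t)$, bounded if $\sup\{t(x,x)\mid x\in D(t),\|x\|=1\}<\infty$. The sum $t+s$ has domain $D(t)\cap D(s)$. $o$ is the zero form on $\mathcal H$. $\mathcal V_f(\mathcal H)$ is the set of positive bilinear forms with dense domain such that $D(t)=\mathcal H$ whenever $t$ is bounded; $t\oplus s$ is defined iff $t$ or $s$ is bounded or $D(t)=D(s)$, and then $t\oplus s=t+s$; it is a generalized effect algebra. A subset $Q$ of a generalized effect algebra $(E;\oplus,0)$ is a sub-generalized effect algebra if $0\in Q$ and whenever $x\oplus y=z$ in $E$ with two of $x,y,z$ in $Q$, all three are in $Q$; $x\oplus_{|Q}y$ is defined iff $x\oplus y$ is defined and lies in $Q$. The induced order of a generalized effect algebra is $x\le y$ iff $x\oplus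 z=y$ for some $z$. It is monotone Dedekind upwards $\sigma$-complete if every increasing sequence with an upper bound has a supremum, and monotone Dedekind downwards $\sigma$-complete if every decreasing sequence has an infimum. *)

theory Defs
  imports "HOL-Analysis.Analysis"
begin

text \<open>The carrier is the whole type 'a; addition, zero, subtraction come from ab_group_add;
  complex scalar multiplication and the inner product (linear in the first argument)
  are the fields of the record.\<close>

record 'a chs =
  smult :: "complex \<Rightarrow> 'a \<Rightarrow> 'a"
  inner :: "'a \<Rightarrow> 'a \<Rightarrow> complex"

definition hnorm :: "('a::ab_group_add) chs \<Rightarrow> 'a \<Rightarrow> real" where
  "hnorm H x = sqrt (Re (inner H x x))"

definition lin_indep :: "('a::ab_group_add) chs \<Rightarrow> 'a set \<Rightarrow> bool" where
  "lin_indep H S \<longleftrightarrow> (\<forall>c. (\<Sum>x\<in>S. smult H (c x) x) = 0 \<longrightarrow> (\<forall>x\<in>S. c x = 0))"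

definition complex_hilbert_space :: "('a::ab_group_add) chs \<Rightarrow> bool" where
  "complex_hilbert_space H \<longleftrightarrow>
     (\<forall>a x y. smult H a (x + y) = smult H a x + smult H a y) \<and>
     (\<forall>a b x. smult H (a + b) x = smult H a x + smult H b x) \<and>
     (\<forall>a b x. smult H a (smult H b x) = smult H (a * b) x) \<and>
     (\<forall>x. smult H 1 x = x) \<and>
     (\<forall>x y z. inner H (x + y) z = inner H x z + inner H y z) \<and>
     (\<forall>a x y. inner H (smult H a x) y = a * inner H x y) \<and>
     (\<forall>x y. inner H y x = cnj (inner H x y)) \<and>
     (\<forall>x. 0 \<le> Re (inner H x x)) \<and>
     (\<forall>x. inner H x x = 0 \<longrightarrow> x = 0) \<and>
     (\<forall>X::nat \<Rightarrow> 'a. (\<forall>e>0. \<exists>N. \<forall>m\<ge>N. \<forall>n\<ge>N. hnorm H (X m - X n) < e) \<longrightarrow>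
        (\<exists>L. \<forall>e>0. \<exists>N. \<forall>n\<ge>N. hnorm H (X n - L) < e))"

definition infinite_dimensional :: "('a::ab_group_add) chs \<Rightarrow> bool" where
  "infinite_dimensional H \<longleftrightarrow> (\<forall>n. \<exists>S. finite S \<and> card S = n \<and> lin_indep H S)"

definition lin_subspace :: "('a::ab_group_add) chs \<Rightarrow> 'a set \<Rightarrow> bool" where
  "lin_subspace H D \<longleftrightarrow> 0 \<in> D \<and> (\<forall>x\<in>D. \<forall>y\<in>D. x + y \<in> D) \<and> (\<forall>a. \<forall>x\<in>D. smult H a x \<in> D)"

definition dense_in :: "('a::ab_group_add) chs \<Rightarrow> 'a set \<Rightarrow> bool" where
  "dense_in H D \<longleftrightarrow> (\<forall>x. \<forall>e>0. \<exists>y\<in>D. hnorm H (x - y) < e)"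

text \<open>A form is a pair (domain, values); values outside domain x domain are normalised to 0,
  so that forms are equal iff they have the same domain and agree on it.\<close>

type_synonym 'a form = "'a set \<times> ('a \<Rightarrow> 'a \<Rightarrow> complex)"

definition fdom :: "'a form \<Rightarrow> 'a set" where "fdom t = fst t"
definition fval :: "'a form \<Rightarrow> 'a \<Rightarrow> 'a \<Rightarrow> complex" where "fval t = snd t"

definition is_form :: "('a::ab_group_add) chs \<Rightarrow> 'a form \<Rightarrow> bool" where
  "is_form H t \<longleftrightarrow> lin_subspace H (fdom t) \<and> dense_in H (fdom t) \<and>
     (\<forall>x y. x \<notin> fdom t \<or> y \<notin> fdom t \<longrightarrow> fval t x y = 0) \<and>
     (\<forall>x\<in>fdom t. \<forall>y\<in>fdom t. \<forall>z\<in>fdom t. fval t (x + y) z = fval t x z + fval t y z) \<and>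
     (\<forall>x\<in>fdom t. \<forall>y\<in>fdom t. \<forall>z\<in>fdom t. fval t x (y + z) = fval t x y + fval t x z) \<and>
     (\<forall>a. \<forall>x\<in>fdom t. \<forall>y\<in>fdom t. fval t (smult H a x) y = a * fval t x y) \<and>
     (\<forall>a. \<forall>x\<in>fdom t. \<forall>y\<in>fdom t. fval t x (smult H a y) = cnj a * fval t x y)"

definition form_positive :: "'a form \<Rightarrow> bool" where
  "form_positive t \<longleftrightarrow> (\<forall>x\<in>fdom t. Im (fval t x x) = 0 \<and> 0 \<le> Re (fval t x x))"

definition form_bounded :: "('a::ab_group_add) chs \<Rightarrow> 'a form \<Rightarrow> bool" where
  "form_bounded H t \<longleftrightarrow> (\<exists>C. \<forall>x\<in>fdom t. hnorm H x = 1 \<longrightarrow> Re (fval t x x) \<le> C)"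

definition form_add :: "'a form \<Rightarrow> 'a form \<Rightarrow> 'a form" where
  "form_add t s = (fdom t \<inter> fdom s,
     (\<lambda>x y. if x \<in> fdom t \<inter> fdom s \<and> y \<in> fdom t \<inter> fdom s then fval t x y + fval s x y else 0))"

definition zero_form :: "'a form" where
  "zero_form = (UNIV, (\<lambda>x y. 0))"

definition Vf :: "('a::ab_group_add) chs \<Rightarrow> 'a form set" where
  "Vf H = {t. is_form H t \<and> form_positive t \<and> (form_bounded H t \<longrightarrow> fdom t = UNIV)}"

definition Vf_oplus :: "('a::ab_group_add) chs \<Rightarrow> 'a form \<Rightarrow> 'a form \<Rightarrow> 'a form option" where
  "Vf_oplus H t s = (if form_bounded H t \<or> form_bounded H s \<or> fdom t = fdom s
                     then Some (form_add t s) else None)"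

definition VfD :: "('a::ab_group_add) chs \<Rightarrow> 'a set \<Rightarrow> 'a form set" where
  "VfD H D = {t \<in> Vf H. form_bounded H t \<or> fdom t = D}"

definition sub_gea :: "'b set \<Rightarrow> ('b \<Rightarrow> 'b \<Rightarrow> 'b option) \<Rightarrow> 'b \<Rightarrow> 'b set \<Rightarrow> bool" where
  "sub_gea E op z Q \<longleftrightarrow> Q \<subseteq> E \<and> z \<in> Q \<and>
     (\<forall>x\<in>E. \<forall>y\<in>E. \<forall>w\<in>E. op x y = Some w \<longrightarrow>
        ((x \<in> Q \<and> y \<in> Q) \<or> (x \<in> Q \<and> w \<in> Q) \<or> (y \<in> Q \<and> w \<in> Q)) \<longrightarrow>
        x \<in> Q \<and> y \<in> Q \<and> w \<in> Q)"

definition restrict_op :: "('b \<Rightarrow> 'b \<Rightarrow> 'b option) \<Rightarrow> 'b set \<Rightarrow> 'b \<Rightarrow> 'b \<Rightarrow> 'b option" where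
  "restrict_op op Q x y = (case op x y of Some w \<Rightarrow> if w \<in> Q then Some w else None | None \<Rightarrow> None)"

definition op_total :: "'b set \<Rightarrow> ('b \<Rightarrow> 'b \<Rightarrow> 'b option) \<Rightarrow> bool" where
  "op_total Q op \<longleftrightarrow> (\<forall>x\<in>Q. \<forall>y\<in>Q. op x y \<noteq> None)"

definition gea_le :: "'b set \<Rightarrow> ('b \<Rightarrow> 'b \<Rightarrow> 'b option) \<Rightarrow> 'b \<Rightarrow> 'b \<Rightarrow> bool" where
  "gea_le Q op x y \<longleftrightarrow> (\<exists>z\<in>Q. op x z = Some y)"

definition is_sup_in :: "'b set \<Rightarrow> ('b \<Rightarrow> 'b \<Rightarrow> 'b option) \<Rightarrow> (nat \<Rightarrow> 'b) \<Rightarrow> 'b \<Rightarrow> bool" where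
  "is_sup_in Q op X s \<longleftrightarrow> s \<in> Q \<and> (\<forall>n. gea_le Q op (X n) s) \<and>
     (\<forall>u\<in>Q. (\<forall>n. gea_le Q op (X n) u) \<longrightarrow> gea_le Q op s u)"

definition is_inf_in :: "'b set \<Rightarrow> ('b \<Rightarrow> 'b \<Rightarrow> 'b option) \<Rightarrow> (nat \<Rightarrow> 'b) \<Rightarrow> 'b \<Rightarrow> bool" where
  "is_inf_in Q op X s \<longleftrightarrow> s \<in> Q \<and> (\<forall>n. gea_le Q op s (X n)) \<and>
     (\<forall>u\<in>Q. (\<forall>n. gea_le Q op u (X n)) \<longrightarrow> gea_le Q op u s)"

definition monotone_dedekind_up_sigma_complete ::
  "'b set \<Rightarrow> ('b \<Rightarrow> 'b \<Rightarrow> 'b option) \<Rightarrow> bool" where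
  "monotone_dedekind_up_sigma_complete Q op \<longleftrightarrow>
     (\<forall>X. (\<forall>n. X n \<in> Q) \<and> (\<forall>n. gea_le Q op (X n) (X (Suc n))) \<and>
          (\<exists>u\<in>Q. \<forall>n. gea_le Q op (X n) u) \<longrightarrow> (\<exists>s. is_sup_in Q op X s))"

definition monotone_dedekind_down_sigma_complete ::
  "'b set \<Rightarrow> ('b \<Rightarrow> 'b \<Rightarrow> 'b option) \<Rightarrow> bool" where
  "monotone_dedekind_down_sigma_complete Q op \<longleftrightarrow>
     (\<forall>X. (\<forall>n. X n \<in> Q) \<and> (\<forall>n. gea_le Q op (X (Suc n)) (X n)) \<longrightarrow> (\<exists>s. is_inf_in Q op X s))"

end

theory Submission
  imports Defs
begin

text \<open>In \<open>V\<^sub>f\<^sub>D(H)\<close> the order is the pointwise order of quadratic forms on \<open>D\<close>: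
  if \<open>x(v,v) \<le> y(v,v)\<close> on \<open>D\<close>, the difference \<open>y - x\<close> is a positive form on \<open>D(y)\<close>, and when it
  is bounded while \<open>x\<close> is not it is replaced by its continuous extension to \<open>H\<close>; conversely
  bounded forms are continuous, so an inequality on the dense set \<open>D\<close> persists on \<open>H\<close>.
  A monotone (bounded) sequence therefore converges pointwise on the diagonal of \<open>D\<close>, by
  polarisation on all of \<open>D \<times> D\<close>, and the limit is a positive form with domain \<open>D\<close>. It lies
  in \<open>V\<^sub>f\<^sub>D(H)\<close> if it is unbounded, and otherwise its continuous extension does; either way
  it is the supremum (infimum) of the sequence. Closure under \<open>\<oplus>\<close> and totality of the
  restricted operation come from the dichotomy "bounded or domain \<open>D\<close>".\<close>

lemma fdom_pair [simp]: "fdom (A, f) = A"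
  by (simp add: fdom_def)

lemma fval_pair [simp]: "fval (A, f) = f"
  by (simp add: fval_def)

lemma form_eqI: "fdom s = fdom t \<Longrightarrow> fval s = fval t \<Longrightarrow> s = t"
  by (simp add: fdom_def fval_def prod_eq_iff)

lemma fdom_form_add [simp]: "fdom (form_add t s) = fdom t \<inter> fdom s"
  by (simp add: form_add_def)

lemma fval_form_add:
  "fval (form_add t s) x y =
     (if x \<in> fdom t \<inter> fdom s \<and> y \<in> fdom t \<inter> fdom s then fval t x y + fval s x y else 0)"
  by (simp add: form_add_def)

lemma form_add_commute: "form_add t s = form_add s t"
  by (rule form_eqI) (auto simp: fval_form_add fun_eq_iff)

definition form_diff :: "'a form \<Rightarrow> 'a form \<Rightarrow> 'a form" where
  "form_diff t s =
     (fdom t, \<lambda>x y. if x \<in> fdom t \<and> y \<in> fdom t then fval t x y - fval s x y else 0)"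

definition limit_form :: "(nat \<Rightarrow> 'a form) \<Rightarrow> 'a set \<Rightarrow> 'a form" where
  "limit_form X S = (S, \<lambda>x y. if x \<in> S \<and> y \<in> S then lim (\<lambda>n. fval (X n) x y) else 0)"

lemma form_outside_zero: "is_form H t \<Longrightarrow> x \<notin> fdom t \<or> y \<notin> fdom t \<Longrightarrow> fval t x y = 0"
  unfolding is_form_def by blast

lemma form_positive_Re_nonneg: "is_form H t \<Longrightarrow> form_positive t \<Longrightarrow> 0 \<le> Re (fval t x x)"
  using form_outside_zero[of H t x x] unfolding form_positive_def by (cases "x \<in> fdom t") auto

lemma form_add_eqI:
  assumes "is_form H t" "fdom s \<inter> fdom r = fdom t"
    and "\<And>x y. x \<in> fdom t \<Longrightarrow> y \<in> fdom t \<Longrightarrow> fval s x y + fval r x y = fval t x y"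
  shows "form_add s r = t"
proof (rule form_eqI)
  show "fdom (form_add s r) = fdom t"
    using assms(2) by simp
  show "fval (form_add s r) = fval t"
    using assms form_outside_zero[OF assms(1)] by (auto simp: fun_eq_iff fval_form_add)
qed

lemma form_positive_form_diff:
  assumes "\<forall>x\<in>fdom t. Re (fval s x x) \<le> Re (fval t x x)" "form_positive t" "form_positive s"
    "fdom t \<subseteq> fdom s"
  shows "form_positive (form_diff t s)"
  using assms by (auto simp: form_positive_def form_diff_def)

lemma Vf_bounded_dom: "t \<in> Vf H \<Longrightarrow> form_bounded H t \<Longrightarrow> fdom t = UNIV"
  by (simp add: Vf_def)

lemma Vf_oplus_eq_Some:
  "Vf_oplus H x z = Some y \<longleftrightarrow>
     (form_bounded H x \<or> form_bounded H z \<or> fdom x = fdom z) \<and> y = form_add x z"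
  by (auto simp: Vf_oplus_def)

lemma form_bounded_mono:
  assumes "form_bounded H s" "fdom t \<subseteq> fdom s" "\<forall>x\<in>fdom t. Re (fval t x x) \<le> Re (fval s x x)"
  shows "form_bounded H t"
  using assms unfolding form_bounded_def by (meson order_trans subsetD)

lemma form_bounded_add:
  assumes "form_bounded H s" "form_bounded H t"
  shows "form_bounded H (form_add s t)"
proof -
  obtain C1 C2 where "\<forall>x\<in>fdom s. hnorm H x = 1 \<longrightarrow> Re (fval s x x) \<le> C1"
    and "\<forall>x\<in>fdom t. hnorm H x = 1 \<longrightarrow> Re (fval t x x) \<le> C2"
    using assms by (auto simp: form_bounded_def)
  then have "\<forall>x\<in>fdom (form_add s t). hnorm H x = 1 \<longrightarrow> Re (fval (form_add s t) x x) \<le> C1 + C2"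
    by (auto simp: fval_form_add intro: add_mono)
  then show ?thesis
    unfolding form_bounded_def by blast
qed

lemma form_bounded_add_summand:
  assumes "is_form H s" "form_positive s" "fdom t \<subseteq> fdom s" "form_bounded H (form_add s t)"
  shows "form_bounded H t"
  using assms(4) by (rule form_bounded_mono)
    (use assms form_positive_Re_nonneg[OF assms(1,2)] in \<open>auto simp: fval_form_add\<close>)

lemma Cauchy_if_dist_le_add:
  fixes X :: "nat \<Rightarrow> 'b::metric_space"
  assumes "\<beta> \<longlonglongrightarrow> 0" and "\<And>m n. dist (X m) (X n) \<le> \<beta> m + \<beta> n"
  shows "Cauchy X"
proof (rule metric_CauchyI)
  fix e :: real
  assume "0 < e"
  then obtain M where M: "\<And>n. n \<ge> M \<Longrightarrow> \<bar>\<beta> n\<bar> < e / 2"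
    using LIMSEQ_D[OF assms(1), of "e / 2"] by auto
  have "dist (X m) (X n) < e" if "m \<ge> M" "n \<ge> M" for m n
    using M[OF that(1)] M[OF that(2)] assms(2)[of m n] by linarith
  then show "\<exists>M. \<forall>m\<ge>M. \<forall>n\<ge>M. dist (X m) (X n) < e"
    by blast
qed

locale complex_inner_space =
  fixes H :: "('a::ab_group_add) chs"
  assumes smult_add_right: "smult H a (x + y) = smult H a x + smult H a y"
    and smult_add_left: "smult H (a + b) x = smult H a x + smult H b x"
    and smult_smult: "smult H a (smult H b x) = smult H (a * b) x"
    and smult_one [simp]: "smult H 1 x = x"
    and ip_add_left: "inner H (x + y) z = inner H x z + inner H y z"
    and ip_smult_left: "inner H (smult H a x) y = a * inner H x y"
    and ip_commute: "\<And>x y. inner H y x = cnj (inner H x y)"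
      \<comment> \<open>explicit binders make the quantifier order agree with \<open>complex_hilbert_space\<close>\<close>
    and ip_self_nonneg: "0 \<le> Re (inner H x x)"
    and ip_self_eq_zero: "inner H x x = 0 \<Longrightarrow> x = 0"

lemma complex_hilbert_space_imp_inner_space:
  assumes "complex_hilbert_space H"
  shows "complex_inner_space H"
  using assms unfolding complex_hilbert_space_def complex_inner_space_def
  by (elim conjE) (intro conjI; assumption)

context complex_inner_space
begin

abbreviation sm where "sm \<equiv> smult H"
abbreviation ip where "ip \<equiv> inner H"
abbreviation nrm where "nrm \<equiv> hnorm H"

lemma smult_zero_left [simp]: "sm 0 x = 0"
  using smult_add_left[of 0 0 x] by simp

lemma smult_minus_one: "sm (-1) x = - x"
  using smult_add_left[of 1 "-1" x] by (simp add: eq_neg_iff_add_eq_0 add.commute)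

lemma smult_minus: "sm a (- x) = - sm a x"
proof -
  have "sm a (- x) = sm a (sm (-1) x)"
    by (simp only: smult_minus_one)
  also have "\<dots> = sm (-1) (sm a x)"
    by (simp only: smult_smult mult.commute)
  finally show ?thesis
    by (simp only: smult_minus_one)
qed

lemma smult_diff: "sm a (x - y) = sm a x - sm a y"
  using smult_add_right[of a x "- y"] by (simp add: smult_minus)

lemma ip_add_right: "ip x (y + z) = ip x y + ip x z"
proof -
  have "ip x (y + z) = cnj (ip (y + z) x)"
    by (rule ip_commute)
  then have "ip x (y + z) = cnj (ip y x) + cnj (ip z x)"
    by (simp add: ip_add_left)
  then show ?thesis
    by (simp only: ip_commute[of y x] ip_commute[of z x] complex_cnj_cnj)
qed

lemma ip_smult_right: "ip x (sm a y) = cnj a * ip x y"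
proof -
  have "ip x (sm a y) = cnj (ip (sm a y) x)"
    by (rule ip_commute)
  then have "ip x (sm a y) = cnj a * cnj (ip y x)"
    by (simp add: ip_smult_left)
  then show ?thesis
    by (simp only: ip_commute[of y x] complex_cnj_cnj)
qed

lemma ip_self_real: "Im (ip x x) = 0"
proof -
  have "Im (ip x x) = Im (cnj (ip x x))"
    using ip_commute[of x x] by simp
  then show ?thesis
    by simp
qed

lemma ip_zero_left [simp]: "ip 0 y = 0"
  using ip_smult_left[of 0 0 y] by simp

lemma subspace_add: "lin_subspace H S \<Longrightarrow> x \<in> S \<Longrightarrow> y \<in> S \<Longrightarrow> x + y \<in> S"
  by (simp add: lin_subspace_def)

lemma subspace_smult: "lin_subspace H S \<Longrightarrow> x \<in> S \<Longrightarrow> sm a x \<in> S"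
  by (simp add: lin_subspace_def)

lemma subspace_zero: "lin_subspace H S \<Longrightarrow> 0 \<in> S"
  by (simp add: lin_subspace_def)

lemma subspace_diff: "lin_subspace H S \<Longrightarrow> x \<in> S \<Longrightarrow> y \<in> S \<Longrightarrow> x - y \<in> S"
  using subspace_add[of S x "- y"] subspace_smult[of S y "-1"] by (simp add: smult_minus_one)

lemma subspace_UNIV: "lin_subspace H UNIV"
  by (simp add: lin_subspace_def)

lemma subspace_Int: "lin_subspace H S \<Longrightarrow> lin_subspace H T \<Longrightarrow> lin_subspace H (S \<inter> T)"
  by (simp add: lin_subspace_def)

definition sesquilinear_on :: "'a set \<Rightarrow> ('a \<Rightarrow> 'a \<Rightarrow> complex) \<Rightarrow> bool" where
  "sesquilinear_on S f \<longleftrightarrow> lin_subspace H S \<and>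
     (\<forall>x\<in>S. \<forall>y\<in>S. \<forall>z\<in>S. f (x + y) z = f x z + f y z) \<and>
     (\<forall>x\<in>S. \<forall>y\<in>S. \<forall>z\<in>S. f x (y + z) = f x y + f x z) \<and>
     (\<forall>a. \<forall>x\<in>S. \<forall>y\<in>S. f (sm a x) y = a * f x y) \<and>
     (\<forall>a. \<forall>x\<in>S. \<forall>y\<in>S. f x (sm a y) = cnj a * f x y)"

definition positive_on :: "'a set \<Rightarrow> ('a \<Rightarrow> 'a \<Rightarrow> complex) \<Rightarrow> bool" where
  "positive_on S f \<longleftrightarrow> (\<forall>x\<in>S. Im (f x x) = 0 \<and> 0 \<le> Re (f x x))"

definition bounded_by :: "'a set \<Rightarrow> ('a \<Rightarrow> 'a \<Rightarrow> complex) \<Rightarrow> real \<Rightarrow> bool" where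
  "bounded_by S f C \<longleftrightarrow> (\<forall>x\<in>S. Re (f x x) \<le> C * (nrm x)\<^sup>2)"

lemma sesquilinear_on_subset:
  "sesquilinear_on T f \<Longrightarrow> lin_subspace H S \<Longrightarrow> S \<subseteq> T \<Longrightarrow> sesquilinear_on S f"
  unfolding sesquilinear_on_def by blast

context
  fixes S f
  assumes sesq: "sesquilinear_on S f"
begin

lemma sesq_subspace: "lin_subspace H S"
  using sesq by (simp add: sesquilinear_on_def)

lemma sesq_add_left: "x \<in> S \<Longrightarrow> y \<in> S \<Longrightarrow> z \<in> S \<Longrightarrow> f (x + y) z = f x z + f y z"
  using sesq by (simp add: sesquilinear_on_def)

lemma sesq_add_right: "x \<in> S \<Longrightarrow> y \<in> S \<Longrightarrow> z \<in> S \<Longrightarrow> f x (y + z) = f x y + f x z"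
  using sesq by (simp add: sesquilinear_on_def)

lemma sesq_smult_left: "x \<in> S \<Longrightarrow> y \<in> S \<Longrightarrow> f (sm a x) y = a * f x y"
  using sesq by (simp add: sesquilinear_on_def)

lemma sesq_smult_right: "x \<in> S \<Longrightarrow> y \<in> S \<Longrightarrow> f x (sm a y) = cnj a * f x y"
  using sesq by (simp add: sesquilinear_on_def)

lemma sesq_zero_left: "y \<in> S \<Longrightarrow> f 0 y = 0"
  using sesq_smult_left[of 0 y 0] subspace_zero[OF sesq_subspace] by simp

lemma sesq_diff_left: "x \<in> S \<Longrightarrow> y \<in> S \<Longrightarrow> z \<in> S \<Longrightarrow> f (x - y) z = f x z - f y z"
  using sesq_add_left[of "x - y" y z] subspace_diff[OF sesq_subspace] by (simp add: eq_diff_eq)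

lemma sesq_diff_right: "x \<in> S \<Longrightarrow> y \<in> S \<Longrightarrow> z \<in> S \<Longrightarrow> f z (x - y) = f z x - f z y"
  using sesq_add_right[of z "x - y" y] subspace_diff[OF sesq_subspace] by (simp add: eq_diff_eq)

lemma sesq_self_add_smult:
  assumes "x \<in> S" "y \<in> S"
  shows "f (x + sm c y) (x + sm c y) = f x x + cnj c * f x y + c * f y x + c * cnj c * f y y"
proof -
  have cy: "sm c y \<in> S" and xcy: "x + sm c y \<in> S"
    using assms subspace_add subspace_smult sesq_subspace by blast+
  show ?thesis
    using assms cy xcy
    by (simp add: sesq_add_left sesq_add_right sesq_smult_left sesq_smult_right algebra_simps)
qed

lemma sesq_polarization:
  assumes "x \<in> S" "y \<in> S"
  shows "f x y = (f (x + y) (x + y) - f (x + sm (-1) y) (x + sm (-1) y)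
                  + \<i> * f (x + sm \<i> y) (x + sm \<i> y) - \<i> * f (x + sm (-\<i>) y) (x + sm (-\<i>) y)) / 4"
proof -
  have "f (x + y) (x + y) = f x x + f x y + f y x + f y y"
    and "f (x + sm (-1) y) (x + sm (-1) y) = f x x - f x y - f y x + f y y"
    and "f (x + sm \<i> y) (x + sm \<i> y) = f x x - \<i> * f x y + \<i> * f y x + f y y"
    and "f (x + sm (-\<i>) y) (x + sm (-\<i>) y) = f x x + \<i> * f x y - \<i> * f y x + f y y"
    using sesq_self_add_smult[OF assms, of 1] sesq_self_add_smult[OF assms, of "-1"]
      sesq_self_add_smult[OF assms, of \<i>] sesq_self_add_smult[OF assms, of "-\<i>"]
    by simp_all
  then show ?thesis
    by (simp only:) (simp add: field_simps)
qed

lemma positive_sesq_hermitian: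
  assumes pos: "positive_on S f" and "x \<in> S" "y \<in> S"
  shows "f y x = cnj (f x y)"
proof -
  have "x + sm 1 y \<in> S" "x + sm \<i> y \<in> S"
    using assms subspace_add subspace_smult sesq_subspace by blast+
  then have "Im (f (x + sm 1 y) (x + sm 1 y)) = 0" "Im (f (x + sm \<i> y) (x + sm \<i> y)) = 0"
    "Im (f x x) = 0" "Im (f y y) = 0"
    using pos assms by (auto simp: positive_on_def simp del: smult_one)
  then have "Im (f x y + f y x) = 0" "Re (f y x - f x y) = 0"
    using sesq_self_add_smult[OF assms(2,3), of 1] sesq_self_add_smult[OF assms(2,3), of \<i>]
    by simp_all
  then show ?thesis
    by (simp add: complex_eq_iff)
qed

lemma positive_sesq_Cauchy_Schwarz:
  assumes pos: "positive_on S f" and xy: "x \<in> S" "y \<in> S"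
  shows "(cmod (f x y))\<^sup>2 \<le> Re (f x x) * Re (f y y)"
proof -
  define A B P where "A = Re (f x x)" and "B = Re (f y y)" and "P = (cmod (f x y))\<^sup>2"
  have fxx: "f x x = of_real A" and fyy: "f y y = of_real B" and AB: "0 \<le> A" "0 \<le> B"
    using pos xy by (auto simp: positive_on_def A_def B_def complex_eq_iff)
  have P: "f x y * cnj (f x y) = of_real P"
    unfolding P_def by (rule complex_norm_square[symmetric])
  have quadratic: "0 \<le> A - 2 * t * P + t\<^sup>2 * P * B" for t :: real
  proof -
    define c where "c = - (of_real t * f x y)"
    have "x + sm c y \<in> S"
      using xy subspace_add subspace_smult sesq_subspace by blast
    then have "0 \<le> Re (f (x + sm c y) (x + sm c y))"
      using pos by (simp add: positive_on_def)
    also have "f (x + sm c y) (x + sm c y) = of_real (A - 2 * t * P + t\<^sup>2 * P * B)"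
      unfolding sesq_self_add_smult[OF xy] positive_sesq_hermitian[OF pos xy] fxx fyy c_def
      using P by (simp add: algebra_simps power2_eq_square)
    finally show ?thesis
      by simp
  qed
  show ?thesis
  proof (cases "B = 0")
    case True
    \<comment> \<open>the quadratic is then linear in \<open>t\<close> and bounded below, so its slope vanishes\<close>
    then have "P = 0"
      using quadratic[of "(A + 1) / (2 * P)"] AB by (cases "P = 0") (simp_all add: field_simps)
    then show ?thesis
      using AB by (simp add: P_def A_def B_def)
  next
    case False
    then have "0 < B"
      using AB by simp
    have "0 \<le> A - 2 * (1 / B) * P + (1 / B)\<^sup>2 * P * B"
      by (rule quadratic)
    also have "\<dots> = (A * B - P) / B"
      using \<open>0 < B\<close> by (simp add: field_simps power2_eq_square)
    finally show ?thesis
      using \<open>0 < B\<close> by (simp add: A_def B_def P_def zero_le_divide_iff)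
  qed
qed

end

lemma ip_sesquilinear: "sesquilinear_on UNIV ip"
  unfolding sesquilinear_on_def
  using subspace_UNIV ip_add_left ip_add_right ip_smult_left ip_smult_right by auto

lemma ip_positive: "positive_on UNIV ip"
  unfolding positive_on_def using ip_self_real ip_self_nonneg by auto

lemma hnorm_nonneg: "0 \<le> nrm x"
  using ip_self_nonneg[of x] by (simp add: hnorm_def)

lemma hnorm_zero [simp]: "nrm 0 = 0"
  by (simp add: hnorm_def)

lemma dense_UNIV: "dense_in H UNIV"
  unfolding dense_in_def by (metis UNIV_I diff_self hnorm_zero)

lemma hnorm_power2: "(nrm x)\<^sup>2 = Re (ip x x)"
  using ip_self_nonneg[of x] by (simp add: hnorm_def)

lemma hnorm_eq_zero: "nrm x = 0 \<Longrightarrow> x = 0"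
  using hnorm_power2[of x] ip_self_real[of x] ip_self_eq_zero[of x] by (simp add: complex_eq_iff)

lemma hnorm_smult: "nrm (sm c x) = cmod c * nrm x"
proof -
  have "ip (sm c x) (sm c x) = of_real ((cmod c)\<^sup>2) * ip x x"
    by (simp add: ip_smult_left ip_smult_right mult.assoc mult.left_commute[of "cnj c"]
        flip: complex_norm_square)
  then show ?thesis
    by (simp add: hnorm_def real_sqrt_mult)
qed

lemma hnorm_minus_commute: "nrm (x - y) = nrm (y - x)"
  using hnorm_smult[of "-1" "y - x"] by (simp add: smult_minus_one)

lemma ip_Cauchy_Schwarz: "cmod (ip x y) \<le> nrm x * nrm y"
proof (rule power2_le_imp_le)
  show "(cmod (ip x y))\<^sup>2 \<le> (nrm x * nrm y)\<^sup>2"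
    using positive_sesq_Cauchy_Schwarz[OF ip_sesquilinear ip_positive]
    by (simp add: hnorm_power2 power_mult_distrib)
qed (simp add: hnorm_nonneg)

lemma hnorm_triangle: "nrm (x + y) \<le> nrm x + nrm y"
proof (rule power2_le_imp_le)
  have "Re (ip x y) \<le> nrm x * nrm y" "Re (ip y x) \<le> nrm x * nrm y"
    using complex_Re_le_cmod ip_Cauchy_Schwarz order_trans mult.commute by metis+
  then show "(nrm (x + y))\<^sup>2 \<le> (nrm x + nrm y)\<^sup>2"
    using hnorm_power2[of x] hnorm_power2[of y]
    by (simp add: hnorm_power2 ip_add_left ip_add_right power2_sum)
qed (simp add: hnorm_nonneg add_nonneg_nonneg)

lemma hnorm_triangle_diff: "nrm (x - z) \<le> nrm (x - y) + nrm (y - z)"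
  using hnorm_triangle[of "x - y" "y - z"] by simp

lemma hnorm_le_add_diff: "nrm x \<le> nrm y + nrm (x - y)"
  using hnorm_triangle[of y "x - y"] by simp

lemma hnorm_reverse_triangle: "\<bar>nrm x - nrm y\<bar> \<le> nrm (x - y)"
  using hnorm_le_add_diff[of x y] hnorm_le_add_diff[of y x] hnorm_minus_commute[of x y] by linarith

abbreviation converges_to :: "(nat \<Rightarrow> 'a) \<Rightarrow> 'a \<Rightarrow> bool" where
  "converges_to c x \<equiv> (\<lambda>n. nrm (c n - x)) \<longlonglongrightarrow> 0"

lemma converges_to_add:
  assumes "converges_to c x" "converges_to d y"
  shows "converges_to (\<lambda>n. c n + d n) (x + y)"
proof (rule Lim_null_comparison)
  show "(\<lambda>n. nrm (c n - x) + nrm (d n - y)) \<longlonglongrightarrow> 0"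
    using tendsto_add[OF assms] by simp
  show "\<forall>\<^sub>F n in sequentially. norm (nrm (c n + d n - (x + y))) \<le> nrm (c n - x) + nrm (d n - y)"
    using hnorm_triangle[of "c _ - x" "d _ - y"] hnorm_nonneg
    by (intro always_eventually allI) (simp add: algebra_simps)
qed

lemma converges_to_smult:
  assumes "converges_to c x"
  shows "converges_to (\<lambda>n. sm a (c n)) (sm a x)"
  using tendsto_mult_left[OF assms, of "cmod a"] by (simp add: hnorm_smult flip: smult_diff)

lemma converges_to_hnorm:
  assumes "converges_to c x"
  shows "(\<lambda>n. nrm (c n)) \<longlonglongrightarrow> nrm x"
proof -
  have "(\<lambda>n. nrm (c n) - nrm x) \<longlonglongrightarrow> 0"
    by (rule Lim_null_comparison[OF _ assms])
      (auto intro!: always_eventually simp: hnorm_reverse_triangle)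
  then show ?thesis
    by (rule LIM_zero_cancel)
qed

lemma dense_approximants:
  assumes "dense_in H S"
  obtains a where "\<And>x n. a x n \<in> S" "\<And>x n. nrm (a x n - x) < inverse (real (Suc n))"
proof -
  have "\<exists>y\<in>S. nrm (y - x) < inverse (real (Suc n))" for x n
    using assms hnorm_minus_commute unfolding dense_in_def
    by (metis inverse_positive_iff_positive of_nat_0_less_iff zero_less_Suc)
  then show ?thesis
    using that by metis
qed

lemma approximants_converge:
  assumes "\<And>n. nrm (c n - x) < inverse (real (Suc n))"
  shows "converges_to c x"
  by (rule Lim_null_comparison[OF _ LIMSEQ_inverse_real_of_nat])
    (use assms hnorm_nonneg in \<open>auto intro!: always_eventually less_imp_le\<close>)

definition continuous_extension :: "'a set \<Rightarrow> ('a \<Rightarrow> 'a \<Rightarrow> complex) \<Rightarrow> ('a \<Rightarrow> 'a \<Rightarrow> complex) \<Rightarrow> bool"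
  where "continuous_extension S f g \<longleftrightarrow>
    (\<forall>c d x y. (\<forall>n. c n \<in> S) \<and> (\<forall>n. d n \<in> S) \<and> converges_to c x \<and> converges_to d y
       \<longrightarrow> (\<lambda>n. f (c n) (d n)) \<longlonglongrightarrow> g x y)"

lemma continuous_extension_sesquilinear:
  assumes sesq: "sesquilinear_on S f" and "dense_in H S" and g: "continuous_extension S f g"
  shows "sesquilinear_on UNIV g"
proof -
  obtain a where aS: "\<And>x n. a x n \<in> S"
    and a_close: "\<And>x n. nrm (a x n - x) < inverse (real (Suc n))"
    using dense_approximants[OF assms(2)] by blast
  have a: "converges_to (a x) x" for x
    by (rule approximants_converge[OF a_close])
  have sub: "lin_subspace H S"
    by (rule sesq_subspace[OF sesq])
  have g_lim: "(\<lambda>n. f (c n) (d n)) \<longlonglongrightarrow> g x y"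
    if "\<And>n. c n \<in> S" "\<And>n. d n \<in> S" "converges_to c x" "converges_to d y" for c d x y
    using g that by (simp add: continuous_extension_def)
  have approx: "(\<lambda>n. f (a x n) (a y n)) \<longlonglongrightarrow> g x y" for x y
    using g_lim aS a by blast
  show ?thesis
    unfolding sesquilinear_on_def
  proof (intro conjI ballI allI subspace_UNIV)
    fix x y z c
    have "(\<lambda>n. f (a x n + a y n) (a z n)) \<longlonglongrightarrow> g (x + y) z"
      by (intro g_lim subspace_add[OF sub] converges_to_add aS a)
    moreover have "(\<lambda>n. f (a x n + a y n) (a z n)) \<longlonglongrightarrow> g x z + g y z"
      unfolding sesq_add_left[OF sesq aS aS aS] by (intro tendsto_add approx)
    ultimately show "g (x + y) z = g x z + g y z"
      by (rule LIMSEQ_unique)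
    have "(\<lambda>n. f (a x n) (a y n + a z n)) \<longlonglongrightarrow> g x (y + z)"
      by (intro g_lim subspace_add[OF sub] converges_to_add aS a)
    moreover have "(\<lambda>n. f (a x n) (a y n + a z n)) \<longlonglongrightarrow> g x y + g x z"
      unfolding sesq_add_right[OF sesq aS aS aS] by (intro tendsto_add approx)
    ultimately show "g x (y + z) = g x y + g x z"
      by (rule LIMSEQ_unique)
    have "(\<lambda>n. f (sm c (a x n)) (a y n)) \<longlonglongrightarrow> g (sm c x) y"
      by (intro g_lim subspace_smult[OF sub] converges_to_smult aS a)
    moreover have "(\<lambda>n. f (sm c (a x n)) (a y n)) \<longlonglongrightarrow> c * g x y"
      unfolding sesq_smult_left[OF sesq aS aS] by (intro tendsto_mult_left approx)
    ultimately show "g (sm c x) y = c * g x y"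
      by (rule LIMSEQ_unique)
    have "(\<lambda>n. f (a x n) (sm c (a y n))) \<longlonglongrightarrow> g x (sm c y)"
      by (intro g_lim subspace_smult[OF sub] converges_to_smult aS a)
    moreover have "(\<lambda>n. f (a x n) (sm c (a y n))) \<longlonglongrightarrow> cnj c * g x y"
      unfolding sesq_smult_right[OF sesq aS aS] by (intro tendsto_mult_left approx)
    ultimately show "g x (sm c y) = cnj c * g x y"
      by (rule LIMSEQ_unique)
  qed
qed

context
  fixes S f C
  assumes sesq: "sesquilinear_on S f" and pos: "positive_on S f"
    and bound: "bounded_by S f C" and C_nonneg: "0 \<le> C"
begin

lemma bounded_sesq_bound: "x \<in> S \<Longrightarrow> y \<in> S \<Longrightarrow> cmod (f x y) \<le> C * nrm x * nrm y"
proof (rule power2_le_imp_le)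
  assume xy: "x \<in> S" "y \<in> S"
  have "(cmod (f x y))\<^sup>2 \<le> Re (f x x) * Re (f y y)"
    by (rule positive_sesq_Cauchy_Schwarz[OF sesq pos xy])
  also have "\<dots> \<le> (C * (nrm x)\<^sup>2) * (C * (nrm y)\<^sup>2)"
    using bound pos xy C_nonneg by (intro mult_mono) (auto simp: bounded_by_def positive_on_def)
  also have "\<dots> = (C * nrm x * nrm y)\<^sup>2"
    by (simp add: power2_eq_square mult_ac)
  finally show "(cmod (f x y))\<^sup>2 \<le> (C * nrm x * nrm y)\<^sup>2" .
qed (simp add: C_nonneg hnorm_nonneg)

lemma bounded_sesq_diff_bound:
  assumes "x \<in> S" "y \<in> S" "x' \<in> S" "y' \<in> S"
  shows "cmod (f x y - f x' y') \<le> C * nrm (x - x') * nrm y + C * nrm x' * nrm (y - y')"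
proof -
  have "f x y - f x' y' = f (x - x') y + f x' (y - y')"
    using assms by (simp add: sesq_diff_left[OF sesq] sesq_diff_right[OF sesq])
  then have "cmod (f x y - f x' y') \<le> cmod (f (x - x') y) + cmod (f x' (y - y'))"
    by (simp add: norm_triangle_ineq)
  moreover have "cmod (f (x - x') y) \<le> C * nrm (x - x') * nrm y"
    and "cmod (f x' (y - y')) \<le> C * nrm x' * nrm (y - y')"
    using assms subspace_diff[OF sesq_subspace[OF sesq]] by (blast intro: bounded_sesq_bound)+
  ultimately show ?thesis
    by linarith
qed

lemma bounded_sesq_tendsto_diff:
  assumes S: "\<And>n. c n \<in> S" "\<And>n. d n \<in> S" "\<And>n. c' n \<in> S" "\<And>n. d' n \<in> S"
    and lim: "converges_to c x" "converges_to c' x" "converges_to d y" "converges_to d' y"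
  shows "(\<lambda>n. f (c n) (d n) - f (c' n) (d' n)) \<longlonglongrightarrow> 0"
proof (rule Lim_null_comparison)
  let ?b = "\<lambda>n. C * (nrm (c n - x) + nrm (c' n - x)) * (nrm y + nrm (d n - y))
              + C * (nrm x + nrm (c' n - x)) * (nrm (d n - y) + nrm (d' n - y))"
  have "?b \<longlonglongrightarrow> C * (0 + 0) * (nrm y + 0) + C * (nrm x + 0) * (0 + 0)"
    by (intro tendsto_intros lim)
  then show "?b \<longlonglongrightarrow> 0"
    by simp
  show "\<forall>\<^sub>F n in sequentially. norm (f (c n) (d n) - f (c' n) (d' n)) \<le> ?b n"
  proof (intro always_eventually allI)
    fix n
    have "nrm (c n - c' n) \<le> nrm (c n - x) + nrm (c' n - x)"
      and "nrm (d n - d' n) \<le> nrm (d n - y) + nrm (d' n - y)"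
      using hnorm_triangle_diff hnorm_minus_commute by metis+
    moreover have "nrm (d n) \<le> nrm y + nrm (d n - y)" "nrm (c' n) \<le> nrm x + nrm (c' n - x)"
      by (rule hnorm_le_add_diff)+
    ultimately have "C * nrm (c n - c' n) * nrm (d n) + C * nrm (c' n) * nrm (d n - d' n) \<le> ?b n"
      using C_nonneg hnorm_nonneg by (intro add_mono mult_mono mult_left_mono) (auto intro: add_nonneg_nonneg)
    then show "norm (f (c n) (d n) - f (c' n) (d' n)) \<le> ?b n"
      using bounded_sesq_diff_bound[OF S(1,2,3,4)[of n]] by simp
  qed
qed

lemma bounded_sesq_tendsto:
  assumes "x \<in> S" "y \<in> S" "\<And>n. c n \<in> S" "\<And>n. d n \<in> S" "converges_to c x" "converges_to d y"
  shows "(\<lambda>n. f (c n) (d n)) \<longlonglongrightarrow> f x y"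
  using bounded_sesq_tendsto_diff[of c d "\<lambda>_. x" "\<lambda>_. y"] assms by (simp add: LIM_zero_iff)

lemma bounded_sesq_approximants_convergent:
  assumes c: "\<And>n. c n \<in> S" "\<And>n. nrm (c n - x) < inverse (real (Suc n))"
    and d: "\<And>n. d n \<in> S" "\<And>n. nrm (d n - y) < inverse (real (Suc n))"
  shows "convergent (\<lambda>n. f (c n) (d n))"
proof -
  have c1: "nrm (c n - x) \<le> 1" and d1: "nrm (d n - y) \<le> 1" for n
    using c(2)[of n] d(2)[of n] inverse_le_1_iff[of "real (Suc n)"] by linarith+
  let ?\<beta> = "\<lambda>n. C * (nrm y + 1) * nrm (c n - x) + C * (nrm x + 1) * nrm (d n - y)"
  have "Cauchy (\<lambda>n. f (c n) (d n))"
  proof (rule Cauchy_if_dist_le_add)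
    have "?\<beta> \<longlonglongrightarrow> C * (nrm y + 1) * 0 + C * (nrm x + 1) * 0"
      using approximants_converge[OF c(2)] approximants_converge[OF d(2)] by (intro tendsto_intros)
    then show "?\<beta> \<longlonglongrightarrow> 0"
      by simp
  next
    fix m n
    have "nrm (c m - c n) \<le> nrm (c m - x) + nrm (c n - x)"
      and "nrm (d m - d n) \<le> nrm (d m - y) + nrm (d n - y)"
      using hnorm_triangle_diff hnorm_minus_commute by metis+
    moreover have "nrm (d m) \<le> nrm y + 1" "nrm (c n) \<le> nrm x + 1"
      using hnorm_le_add_diff[of "d m" y] hnorm_le_add_diff[of "c n" x] c1[of n] d1[of m]
      by linarith+
    ultimately have "C * nrm (c m - c n) * nrm (d m) + C * nrm (c n) * nrm (d m - d n)
        \<le> C * (nrm (c m - x) + nrm (c n - x)) * (nrm y + 1)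
          + C * (nrm x + 1) * (nrm (d m - y) + nrm (d n - y))"
      using C_nonneg hnorm_nonneg by (intro add_mono mult_mono mult_left_mono) (auto intro: add_nonneg_nonneg)
    also have "\<dots> = ?\<beta> m + ?\<beta> n"
      by (simp add: algebra_simps)
    finally show "dist (f (c m) (d m)) (f (c n) (d n)) \<le> ?\<beta> m + ?\<beta> n"
      using bounded_sesq_diff_bound[OF c(1)[of m] d(1)[of m] c(1)[of n] d(1)[of n]]
      by (simp add: dist_norm)
  qed
  then show ?thesis
    by (simp add: Cauchy_convergent_iff)
qed

lemma bounded_sesq_extension_limit:
  assumes "dense_in H S"
  obtains g where "continuous_extension S f g"
proof -
  obtain a where a: "\<And>x n. a x n \<in> S" "\<And>x n. nrm (a x n - x) < inverse (real (Suc n))"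
    using dense_approximants[OF assms] by blast
  define g where "g x y = lim (\<lambda>n. f (a x n) (a y n))" for x y
  have approx: "(\<lambda>n. f (a x n) (a y n)) \<longlonglongrightarrow> g x y" for x y
    using bounded_sesq_approximants_convergent[OF a a] by (simp add: g_def convergent_LIMSEQ_iff)
  have "continuous_extension S f g"
    unfolding continuous_extension_def
  proof (intro allI impI)
    fix c d x y
    assume cd: "(\<forall>n. c n \<in> S) \<and> (\<forall>n. d n \<in> S) \<and> converges_to c x \<and> converges_to d y"
    have "(\<lambda>n. f (c n) (d n) - f (a x n) (a y n)) \<longlonglongrightarrow> 0"
      using cd a approximants_converge by (intro bounded_sesq_tendsto_diff) auto
    then have "(\<lambda>n. (f (c n) (d n) - f (a x n) (a y n)) + f (a x n) (a y n)) \<longlonglongrightarrow> 0 + g x y"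
      using approx by (rule tendsto_add)
    then show "(\<lambda>n. f (c n) (d n)) \<longlonglongrightarrow> g x y"
      by simp
  qed
  then show ?thesis
    by (rule that)
qed

lemma bounded_sesq_extension:
  assumes "dense_in H S"
  obtains g where "sesquilinear_on UNIV g" "positive_on UNIV g" "bounded_by UNIV g C"
    "\<And>x y. x \<in> S \<Longrightarrow> y \<in> S \<Longrightarrow> g x y = f x y"
proof -
  obtain g where g: "continuous_extension S f g"
    using bounded_sesq_extension_limit[OF assms] by blast
  obtain a where aS: "\<And>x n. a x n \<in> S"
    and a_close: "\<And>x n. nrm (a x n - x) < inverse (real (Suc n))"
    using dense_approximants[OF assms] by blast
  have a: "converges_to (a x) x" for x
    by (rule approximants_converge[OF a_close])
  have approx: "(\<lambda>n. f (a x n) (a y n)) \<longlonglongrightarrow> g x y" for x y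
    using g aS a by (simp add: continuous_extension_def)
  have "positive_on UNIV g"
    unfolding positive_on_def
  proof (intro ballI conjI)
    fix x
    have Im: "Im (f (a x n) (a x n)) = 0" and Re: "0 \<le> Re (f (a x n) (a x n))" for n
      using pos aS by (auto simp: positive_on_def)
    show "Im (g x x) = 0"
      using tendsto_Im[OF approx, of x x] by (simp add: Im LIMSEQ_const_iff)
    show "0 \<le> Re (g x x)"
      by (rule LIMSEQ_le_const[OF tendsto_Re[OF approx]]) (use Re in blast)
  qed
  moreover have "bounded_by UNIV g C"
    unfolding bounded_by_def
  proof
    fix x
    have "Re (f (a x n) (a x n)) \<le> C * (nrm (a x n))\<^sup>2" for n
      using bound aS by (auto simp: bounded_by_def)
    then show "Re (g x x) \<le> C * (nrm x)\<^sup>2"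
      using tendsto_Re[OF approx] converges_to_hnorm[OF a]
      by (intro LIMSEQ_le[of "\<lambda>n. Re (f (a x n) (a x n))" _ "\<lambda>n. C * (nrm (a x n))\<^sup>2"])
        (auto intro!: tendsto_intros)
  qed
  moreover have "g x y = f x y" if "x \<in> S" "y \<in> S" for x y
    using g[unfolded continuous_extension_def, rule_format, of "\<lambda>_. x" "\<lambda>_. y" x y] that
    by (simp add: LIMSEQ_const_iff)
  ultimately show ?thesis
    using that continuous_extension_sesquilinear[OF sesq assms g] by blast
qed

end

lemma sesq_convergent_if_diagonal_convergent:
  assumes sesq: "\<And>n. sesquilinear_on S (F n)"
    and diag: "\<And>v. v \<in> S \<Longrightarrow> convergent (\<lambda>n. F n v v)"
    and xy: "x \<in> S" "y \<in> S"
  shows "convergent (\<lambda>n. F n x y)"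
proof -
  have sub: "lin_subspace H S"
    using sesq_subspace[OF sesq] .
  have "x + sm c y \<in> S" for c
    using xy subspace_add[OF sub] subspace_smult[OF sub] by blast
  then have lim: "(\<lambda>n. F n (x + sm c y) (x + sm c y)) \<longlonglongrightarrow> lim (\<lambda>n. F n (x + sm c y) (x + sm c y))"
    for c using diag convergent_LIMSEQ_iff by blast
  have "(\<lambda>n. (F n (x + y) (x + y) - F n (x + sm (-1) y) (x + sm (-1) y)
       + \<i> * F n (x + sm \<i> y) (x + sm \<i> y) - \<i> * F n (x + sm (-\<i>) y) (x + sm (-\<i>) y)) / 4)
      \<longlonglongrightarrow> (lim (\<lambda>n. F n (x + sm 1 y) (x + sm 1 y)) - lim (\<lambda>n. F n (x + sm (-1) y) (x + sm (-1) y))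
       + \<i> * lim (\<lambda>n. F n (x + sm \<i> y) (x + sm \<i> y))
       - \<i> * lim (\<lambda>n. F n (x + sm (-\<i>) y) (x + sm (-\<i>) y))) / 4"
    using lim[of 1] by (intro tendsto_intros lim) simp_all
  then show ?thesis
    unfolding convergent_def by (auto simp only: sesq_polarization[OF sesq xy, symmetric])
qed

lemma sesquilinear_on_limit:
  assumes sesq: "\<And>n. sesquilinear_on S (F n)"
    and lim: "\<And>x y. x \<in> S \<Longrightarrow> y \<in> S \<Longrightarrow> (\<lambda>n. F n x y) \<longlonglongrightarrow> L x y"
  shows "sesquilinear_on S L"
  unfolding sesquilinear_on_def
proof (intro conjI ballI allI)
  have sub: "lin_subspace H S"
    using sesq_subspace[OF sesq] .
  then show "lin_subspace H S" .
  fix c x y z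
  assume S: "x \<in> S" "y \<in> S" "z \<in> S"
  have "(\<lambda>n. F n (x + y) z) \<longlonglongrightarrow> L x z + L y z"
    unfolding sesq_add_left[OF sesq S] using S by (intro tendsto_add lim)
  then show "L (x + y) z = L x z + L y z"
    using lim[OF subspace_add[OF sub S(1,2)] S(3)] LIMSEQ_unique by blast
  have "(\<lambda>n. F n x (y + z)) \<longlonglongrightarrow> L x y + L x z"
    unfolding sesq_add_right[OF sesq S] using S by (intro tendsto_add lim)
  then show "L x (y + z) = L x y + L x z"
    using lim[OF S(1) subspace_add[OF sub S(2,3)]] LIMSEQ_unique by blast
next
  fix c x y
  assume S: "x \<in> S" "y \<in> S"
  have sub: "lin_subspace H S"
    using sesq_subspace[OF sesq] .
  have "(\<lambda>n. F n (sm c x) y) \<longlonglongrightarrow> c * L x y"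
    unfolding sesq_smult_left[OF sesq S] using S by (intro tendsto_mult_left lim)
  then show "L (sm c x) y = c * L x y"
    using lim[OF subspace_smult[OF sub S(1)] S(2)] LIMSEQ_unique by blast
  have "(\<lambda>n. F n x (sm c y)) \<longlonglongrightarrow> cnj c * L x y"
    unfolding sesq_smult_right[OF sesq S] using S by (intro tendsto_mult_left lim)
  then show "L x (sm c y) = cnj c * L x y"
    using lim[OF S(1) subspace_smult[OF sub S(2)]] LIMSEQ_unique by blast
qed

lemma positive_on_limit:
  assumes pos: "\<And>n. positive_on S (F n)"
    and lim: "\<And>x. x \<in> S \<Longrightarrow> (\<lambda>n. F n x x) \<longlonglongrightarrow> L x x"
  shows "positive_on S L"
  unfolding positive_on_def
proof (intro ballI conjI)
  fix x
  assume x: "x \<in> S"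
  have Im: "Im (F n x x) = 0" and Re: "0 \<le> Re (F n x x)" for n
    using pos x by (auto simp: positive_on_def)
  show "Im (L x x) = 0"
    using tendsto_Im[OF lim[OF x]] by (simp add: Im LIMSEQ_const_iff)
  show "0 \<le> Re (L x x)"
    by (rule LIMSEQ_le_const[OF tendsto_Re[OF lim[OF x]]]) (use Re in blast)
qed

lemma is_form_iff:
  "is_form H t \<longleftrightarrow> sesquilinear_on (fdom t) (fval t) \<and> dense_in H (fdom t) \<and>
     (\<forall>x y. x \<notin> fdom t \<or> y \<notin> fdom t \<longrightarrow> fval t x y = 0)"
  unfolding is_form_def sesquilinear_on_def by blast

lemma form_positive_iff: "form_positive t \<longleftrightarrow> positive_on (fdom t) (fval t)"
  unfolding form_positive_def positive_on_def ..

lemma form_bounded_imp_bounded_by: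
  assumes "is_form H t" "form_positive t" "form_bounded H t"
  obtains C where "0 \<le> C" "bounded_by (fdom t) (fval t) C"
proof -
  have sesq: "sesquilinear_on (fdom t) (fval t)"
    using assms(1) by (simp add: is_form_iff)
  obtain C0 where C0: "\<forall>x\<in>fdom t. nrm x = 1 \<longrightarrow> Re (fval t x x) \<le> C0"
    using assms(3) by (auto simp: form_bounded_def)
  define C where "C = max C0 0"
  have "Re (fval t v v) \<le> C * (nrm v)\<^sup>2" if v: "v \<in> fdom t" for v
  proof (cases "v = 0")
    case True
    then show ?thesis
      using sesq_zero_left[OF sesq v] by (simp add: C_def)
  next
    case False
    define r where "r = nrm v"
    have "0 < r"
      using False hnorm_eq_zero hnorm_nonneg r_def by (metis order_less_le)
    define u where "u = sm (of_real (1 / r)) v"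
    have u: "u \<in> fdom t" "nrm u = 1"
      using v subspace_smult[OF sesq_subspace[OF sesq]] \<open>0 < r\<close>
      by (auto simp: u_def hnorm_smult r_def norm_divide)
    have "v = sm (of_real r) u"
      using \<open>0 < r\<close> by (simp add: u_def smult_smult flip: of_real_mult)
    then have "Re (fval t v v) = r\<^sup>2 * Re (fval t u u)"
      using u sesq_smult_left[OF sesq] sesq_smult_right[OF sesq]
        subspace_smult[OF sesq_subspace[OF sesq]]
      by (simp add: power2_eq_square)
    also have "\<dots> \<le> r\<^sup>2 * C"
      using C0 u by (intro mult_left_mono) (auto simp: C_def)
    finally show ?thesis
      by (simp add: r_def mult.commute)
  qed
  then show ?thesis
    using that[of C] by (simp add: bounded_by_def C_def)
qed

lemma form_UNIV_in_Vf:
  assumes "sesquilinear_on UNIV g" "positive_on UNIV g"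
  shows "(UNIV, g) \<in> Vf H"
  using assms dense_UNIV by (simp add: Vf_def is_form_iff form_positive_iff)

lemma bounded_by_imp_form_bounded: "bounded_by UNIV g C \<Longrightarrow> form_bounded H (UNIV, g)"
  unfolding bounded_by_def form_bounded_def by (metis UNIV_I fdom_pair fval_pair mult.right_neutral power_one)

lemma bounded_form_extension:
  assumes "is_form H t" "form_positive t" "form_bounded H t"
  obtains s where "s \<in> Vf H" "fdom s = UNIV" "form_bounded H s"
    "\<And>x y. x \<in> fdom t \<Longrightarrow> y \<in> fdom t \<Longrightarrow> fval s x y = fval t x y"
proof -
  obtain C where C: "0 \<le> C" "bounded_by (fdom t) (fval t) C"
    using form_bounded_imp_bounded_by[OF assms] .
  have "sesquilinear_on (fdom t) (fval t)" "dense_in H (fdom t)" "positive_on (fdom t) (fval t)"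
    using assms by (simp_all add: is_form_iff form_positive_iff)
  then obtain g where "sesquilinear_on UNIV g" "positive_on UNIV g" "bounded_by UNIV g C"
    "\<And>x y. x \<in> fdom t \<Longrightarrow> y \<in> fdom t \<Longrightarrow> g x y = fval t x y"
    using bounded_sesq_extension C by metis
  then show ?thesis
    using that[of "(UNIV, g)"] form_UNIV_in_Vf bounded_by_imp_form_bounded by simp
qed

lemma Vf_bounded_tendsto:
  assumes t: "t \<in> Vf H" "form_bounded H t" and "converges_to c x" "converges_to d y"
  shows "(\<lambda>n. fval t (c n) (d n)) \<longlonglongrightarrow> fval t x y"
proof -
  have form: "is_form H t" "form_positive t"
    using t(1) by (simp_all add: Vf_def)
  obtain C where "0 \<le> C" "bounded_by (fdom t) (fval t) C"
    using form_bounded_imp_bounded_by[OF form t(2)] .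
  moreover have "sesquilinear_on (fdom t) (fval t)" "positive_on (fdom t) (fval t)"
    using form by (simp_all add: is_form_iff form_positive_iff)
  ultimately show ?thesis
    using bounded_sesq_tendsto assms Vf_bounded_dom[OF t] by simp
qed

lemma Vf_bounded_le_if_le_on_dense:
  assumes s: "s \<in> Vf H" "form_bounded H s" and t: "t \<in> Vf H" "form_bounded H t"
    and "dense_in H S" "\<forall>x\<in>S. Re (fval s x x) \<le> Re (fval t x x)"
  shows "Re (fval s x x) \<le> Re (fval t x x)"
proof -
  obtain a where "\<And>n. a n \<in> S" "\<And>n. nrm (a n - x) < inverse (real (Suc n))"
    using dense_approximants[OF assms(5)] by metis
  then have a: "converges_to a x" and le: "\<And>n. Re (fval s (a n) (a n)) \<le> Re (fval t (a n) (a n))"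
    using assms(6) approximants_converge by auto
  show ?thesis
    by (rule LIMSEQ_le[OF tendsto_Re[OF Vf_bounded_tendsto[OF s a a]]
          tendsto_Re[OF Vf_bounded_tendsto[OF t a a]]]) (use le in blast)
qed

lemma pointwise_limit_form:
  assumes sub: "lin_subspace H S" and dense: "dense_in H S"
    and X: "\<And>n. X n \<in> Vf H" "\<And>n. S \<subseteq> fdom (X n)"
    and conv: "\<And>v. v \<in> S \<Longrightarrow> convergent (\<lambda>n. Re (fval (X n) v v))"
  shows "is_form H (limit_form X S)" "form_positive (limit_form X S)" "fdom (limit_form X S) = S"
    "\<And>v. v \<in> S \<Longrightarrow> (\<lambda>n. Re (fval (X n) v v)) \<longlonglongrightarrow> Re (fval (limit_form X S) v v)"
proof -
  have sesq: "sesquilinear_on S (fval (X n))" for n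
  proof -
    have "sesquilinear_on (fdom (X n)) (fval (X n))"
      using X(1) by (simp add: Vf_def is_form_iff)
    then show ?thesis
      using sub X(2) by (rule sesquilinear_on_subset)
  qed
  have pos: "positive_on S (fval (X n))" for n
    using X by (auto simp: Vf_def form_positive_iff positive_on_def)
  have "convergent (\<lambda>n. fval (X n) v v)" if v: "v \<in> S" for v
  proof -
    have "(\<lambda>n. fval (X n) v v) = (\<lambda>n. of_real (Re (fval (X n) v v)))"
      using pos v by (simp add: positive_on_def complex_eq_iff fun_eq_iff)
    then show ?thesis
      using conv[OF v] by (simp add: convergent_def) (use tendsto_of_real in blast)
  qed
  then have lim: "(\<lambda>n. fval (X n) x y) \<longlonglongrightarrow> fval (limit_form X S) x y" if "x \<in> S" "y \<in> S" for x y
    using sesq_convergent_if_diagonal_convergent[OF sesq _ that] that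
    by (simp add: limit_form_def convergent_LIMSEQ_iff)
  show "fdom (limit_form X S) = S"
    by (simp add: limit_form_def)
  moreover have "sesquilinear_on S (fval (limit_form X S))"
    using sesq lim by (rule sesquilinear_on_limit)
  ultimately show "is_form H (limit_form X S)"
    using dense by (simp add: is_form_iff limit_form_def)
  show "form_positive (limit_form X S)"
    using positive_on_limit[where L = "fval (limit_form X S)", OF pos lim]
    by (simp add: form_positive_iff limit_form_def)
  show "(\<lambda>n. Re (fval (X n) v v)) \<longlonglongrightarrow> Re (fval (limit_form X S) v v)" if "v \<in> S" for v
    using tendsto_Re[OF lim[OF that that]] .
qed

lemma is_form_add:
  assumes "is_form H t" "is_form H s" "dense_in H (fdom t \<inter> fdom s)"
  shows "is_form H (form_add t s)"
proof -
  have st: "sesquilinear_on (fdom t) (fval t)" "sesquilinear_on (fdom s) (fval s)"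
    using assms by (simp_all add: is_form_iff)
  have sub: "lin_subspace H (fdom t \<inter> fdom s)"
    using subspace_Int[OF sesq_subspace[OF st(1)] sesq_subspace[OF st(2)]] .
  have "sesquilinear_on (fdom t \<inter> fdom s) (fval (form_add t s))"
    unfolding sesquilinear_on_def
    using sub subspace_add[OF sub] subspace_smult[OF sub]
      sesq_add_left[OF st(1)] sesq_add_left[OF st(2)] sesq_add_right[OF st(1)] sesq_add_right[OF st(2)]
      sesq_smult_left[OF st(1)] sesq_smult_left[OF st(2)] sesq_smult_right[OF st(1)] sesq_smult_right[OF st(2)]
    by (simp add: fval_form_add algebra_simps)
  then show ?thesis
    using assms(3) by (simp add: is_form_iff fval_form_add)
qed

lemma form_add_in_Vf:
  assumes t: "t \<in> Vf H" and s: "s \<in> Vf H"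
    and defined: "form_bounded H t \<or> form_bounded H s \<or> fdom t = fdom s"
  shows "form_add t s \<in> Vf H"
proof -
  have form: "is_form H t" "form_positive t" "is_form H s" "form_positive s"
    using t s by (simp_all add: Vf_def)
  have "dense_in H (fdom t)" "dense_in H (fdom s)"
    using form by (simp_all add: is_form_iff)
  then have "dense_in H (fdom t \<inter> fdom s)"
    using defined Vf_bounded_dom[OF t] Vf_bounded_dom[OF s] by (elim disjE) simp_all
  then have "is_form H (form_add t s)"
    using form(1,3) by (rule is_form_add[rotated 2])
  moreover have "form_positive (form_add t s)"
    using form unfolding form_positive_def by (auto simp: fval_form_add)
  moreover have "fdom (form_add t s) = UNIV" if bounded: "form_bounded H (form_add t s)"
  proof -
    have "form_bounded H s" if "fdom s \<subseteq> fdom t"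
      using form_bounded_add_summand[OF form(1,2) that bounded] .
    moreover have "form_bounded H t" if "fdom t \<subseteq> fdom s"
      using form_bounded_add_summand[OF form(3,4) that] bounded by (simp add: form_add_commute)
    ultimately show ?thesis
      using defined Vf_bounded_dom[OF t] Vf_bounded_dom[OF s] by (elim disjE) auto
  qed
  ultimately show ?thesis
    by (simp add: Vf_def)
qed

lemma is_form_form_diff:
  assumes "is_form H t" "is_form H s" "fdom t \<subseteq> fdom s"
  shows "is_form H (form_diff t s)"
proof -
  have "sesquilinear_on (fdom s) (fval s)"
    using assms(2) by (simp add: is_form_iff)
  moreover have st: "sesquilinear_on (fdom t) (fval t)"
    using assms(1) by (simp add: is_form_iff)
  ultimately have ss: "sesquilinear_on (fdom t) (fval s)"
    using sesq_subspace assms(3) by (blast intro: sesquilinear_on_subset)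
  have sub: "lin_subspace H (fdom t)"
    by (rule sesq_subspace[OF st])
  have "sesquilinear_on (fdom t) (fval (form_diff t s))"
    unfolding sesquilinear_on_def
    using sub subspace_add[OF sub] subspace_smult[OF sub]
      sesq_add_left[OF st] sesq_add_left[OF ss] sesq_add_right[OF st] sesq_add_right[OF ss]
      sesq_smult_left[OF st] sesq_smult_left[OF ss] sesq_smult_right[OF st] sesq_smult_right[OF ss]
    by (simp add: form_diff_def algebra_simps)
  then show ?thesis
    using assms(1) by (simp add: is_form_iff form_diff_def)
qed

lemma zero_form_in_Vf: "zero_form \<in> Vf H" "form_bounded H zero_form"
proof -
  have "sesquilinear_on UNIV (\<lambda>x y. 0)" "positive_on UNIV (\<lambda>x y. 0)" "bounded_by UNIV (\<lambda>x y. 0) 0"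
    by (simp_all add: sesquilinear_on_def subspace_UNIV positive_on_def bounded_by_def)
  then show "zero_form \<in> Vf H" "form_bounded H zero_form"
    using form_UNIV_in_Vf bounded_by_imp_form_bounded unfolding zero_form_def by blast+
qed

context
  fixes D
  assumes D: "lin_subspace H D" "dense_in H D"
begin

abbreviation oplusD where "oplusD \<equiv> restrict_op (Vf_oplus H) (VfD H D)"

lemma VfD_Vf: "t \<in> VfD H D \<Longrightarrow> t \<in> Vf H"
  by (simp add: VfD_def)

lemma VfD_unbounded_dom: "t \<in> VfD H D \<Longrightarrow> \<not> form_bounded H t \<Longrightarrow> fdom t = D"
  by (simp add: VfD_def)

lemma VfD_dom: "t \<in> VfD H D \<Longrightarrow> D \<subseteq> fdom t"
  by (auto simp: VfD_def Vf_def)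

lemma VfD_I: "t \<in> Vf H \<Longrightarrow> form_bounded H t \<or> fdom t = D \<Longrightarrow> t \<in> VfD H D"
  by (simp add: VfD_def)

lemma oplusD_eq_Some: "oplusD x z = Some y \<longleftrightarrow> Vf_oplus H x z = Some y \<and> y \<in> VfD H D"
  by (auto simp: restrict_op_def split: option.splits)

lemma VfD_le_imp_le:
  assumes "gea_le (VfD H D) oplusD x y"
  shows "\<forall>v\<in>fdom y. Re (fval x v v) \<le> Re (fval y v v)"
proof -
  obtain z where "z \<in> VfD H D" "y = form_add x z"
    using assms by (auto simp: gea_le_def oplusD_eq_Some Vf_oplus_eq_Some)
  moreover have "0 \<le> Re (fval z v v)" if "z \<in> VfD H D" for v
    using VfD_Vf[OF that] by (intro form_positive_Re_nonneg[of H]) (simp_all add: Vf_def)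
  ultimately show ?thesis
    by (auto simp: fval_form_add)
qed

lemma VfD_leI:
  assumes "w \<in> VfD H D" "y \<in> VfD H D" "form_bounded H x \<or> form_bounded H w \<or> fdom x = fdom w"
    "form_add x w = y"
  shows "gea_le (VfD H D) oplusD x y"
  using assms by (auto simp: gea_le_def oplusD_eq_Some Vf_oplus_eq_Some)

lemma VfD_form_diff:
  assumes x: "x \<in> VfD H D" and y: "y \<in> VfD H D"
    and le: "\<forall>v\<in>fdom y. Re (fval x v v) \<le> Re (fval y v v)"
  shows "fdom y \<subseteq> fdom x" "is_form H (form_diff y x)" "form_positive (form_diff y x)"
    "fdom (form_diff y x) = fdom y" "form_add x (form_diff y x) = y"
    "Re (fval (form_diff y x) v v) \<le> Re (fval y v v)"
proof -
  have xf: "is_form H x" "form_positive x" and yf: "is_form H y" "form_positive y"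
    using x y VfD_Vf by (simp_all add: Vf_def)
  show dom: "fdom y \<subseteq> fdom x"
  proof (cases "form_bounded H y")
    case True
    then have "form_bounded H x"
      by (rule form_bounded_mono) (use le Vf_bounded_dom[OF VfD_Vf[OF y] True] in simp_all)
    then show ?thesis
      using Vf_bounded_dom[OF VfD_Vf[OF x]] by simp
  qed (use VfD_unbounded_dom[OF y] VfD_dom[OF x] in blast)
  show "is_form H (form_diff y x)" "form_positive (form_diff y x)"
    using is_form_form_diff[OF yf(1) xf(1) dom] form_positive_form_diff[OF le yf(2) xf(2) dom] .
  show "fdom (form_diff y x) = fdom y"
    by (simp add: form_diff_def)
  show "form_add x (form_diff y x) = y"
    using yf(1) by (rule form_add_eqI) (use dom in \<open>auto simp: form_diff_def\<close>)
  show "Re (fval (form_diff y x) v v) \<le> Re (fval y v v)"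
    using form_positive_Re_nonneg[OF xf] form_outside_zero[OF yf(1)] by (simp add: form_diff_def)
qed

lemma VfD_le_if_le:
  assumes x: "x \<in> VfD H D" and y: "y \<in> VfD H D"
    and le: "\<forall>v\<in>fdom y. Re (fval x v v) \<le> Re (fval y v v)"
  shows "gea_le (VfD H D) oplusD x y"
proof -
  define z where "z = form_diff y x"
  note z = VfD_form_diff[OF x y le, folded z_def]
  consider "form_bounded H z" "form_bounded H x" | "\<not> form_bounded H z" | "form_bounded H z" "\<not> form_bounded H x"
    by blast
  then show ?thesis
  proof cases
    case 1
    then have "form_bounded H y"
      using form_bounded_add[OF 1(2,1)] by (simp add: z(5))
    then have "z \<in> VfD H D"
      using 1 VfD_I z(2-4) Vf_bounded_dom[OF VfD_Vf[OF y]] by (simp add: Vf_def)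
    then show ?thesis
      using 1 z(5) y by (intro VfD_leI) simp_all
  next
    case 2
    then have "\<not> form_bounded H y"
      using form_bounded_mono[of H y z] z(4,6) by blast
    then have "fdom z = D"
      using VfD_unbounded_dom[OF y] z(4) by simp
    then have "z \<in> VfD H D"
      using 2 VfD_I z(2,3) by (simp add: Vf_def)
    moreover have "form_bounded H x \<or> fdom x = fdom z"
      using VfD_unbounded_dom[OF x] \<open>fdom z = D\<close> by blast
    ultimately show ?thesis
      using z(5) y by (intro VfD_leI) auto
  next
    case 3
    then have "fdom x = fdom y"
      using VfD_unbounded_dom[OF x] VfD_dom[OF y] z(1) by blast
    obtain z' where z': "z' \<in> Vf H" "fdom z' = UNIV" "form_bounded H z'"
      "\<And>a b. a \<in> fdom z \<Longrightarrow> b \<in> fdom z \<Longrightarrow> fval z' a b = fval z a b"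
      using bounded_form_extension[OF z(2,3) 3(1)] by blast
    have "is_form H y"
      using VfD_Vf[OF y] by (simp add: Vf_def)
    then have "form_add x z' = y"
      by (rule form_add_eqI) (use z' z(4) \<open>fdom x = fdom y\<close> in \<open>simp_all add: z_def form_diff_def\<close>)
    then show ?thesis
      using z' y VfD_I[OF z'(1)] by (intro VfD_leI) simp_all
  qed
qed

lemma VfD_le_iff:
  assumes x: "x \<in> VfD H D" and y: "y \<in> VfD H D"
  shows "gea_le (VfD H D) oplusD x y \<longleftrightarrow> (\<forall>v\<in>D. Re (fval x v v) \<le> Re (fval y v v))"
proof
  show "\<forall>v\<in>D. Re (fval x v v) \<le> Re (fval y v v)" if "gea_le (VfD H D) oplusD x y"
    using VfD_le_imp_le[OF that] VfD_dom[OF y] by blast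
next
  assume le: "\<forall>v\<in>D. Re (fval x v v) \<le> Re (fval y v v)"
  have "\<forall>v\<in>fdom y. Re (fval x v v) \<le> Re (fval y v v)"
  proof (cases "form_bounded H y")
    case True
    have "form_bounded H x"
    proof (rule ccontr)
      assume "\<not> form_bounded H x"
      moreover from this have "fdom x = D"
        by (rule VfD_unbounded_dom[OF x])
      ultimately show False
        using form_bounded_mono[OF True] le Vf_bounded_dom[OF VfD_Vf[OF y] True] by simp
    qed
    then show ?thesis
      using Vf_bounded_le_if_le_on_dense[OF VfD_Vf[OF x] _ VfD_Vf[OF y] True D(2) le] by blast
  next
    case False
    then show ?thesis
      using le VfD_unbounded_dom[OF y] by simp
  qed
  then show "gea_le (VfD H D) oplusD x y"
    by (rule VfD_le_if_le[OF x y])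
qed

lemma form_add_in_VfD:
  assumes x: "x \<in> VfD H D" and y: "y \<in> VfD H D" and xy: "form_add x y \<in> Vf H"
  shows "form_add x y \<in> VfD H D"
proof (cases "form_bounded H x \<and> form_bounded H y")
  case True
  then show ?thesis
    using VfD_I[OF xy] form_bounded_add by blast
next
  case False
  then have "fdom (form_add x y) = D"
    using VfD_unbounded_dom[OF x] VfD_unbounded_dom[OF y] VfD_dom[OF x] VfD_dom[OF y] by auto
  then show ?thesis
    using VfD_I[OF xy] by blast
qed

lemma VfD_summand:
  assumes x: "x \<in> VfD H D" and y: "y \<in> Vf H"
    and defined: "form_bounded H x \<or> form_bounded H y \<or> fdom x = fdom y"
    and xy: "form_add x y \<in> VfD H D"
  shows "y \<in> VfD H D"
proof (cases "form_bounded H y")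
  case False
  have "fdom y = D"
  proof (cases "form_bounded H x")
    case True
    then have "fdom x = UNIV"
      using Vf_bounded_dom[OF VfD_Vf[OF x]] by blast
    then have "\<not> form_bounded H (form_add x y)"
      using form_bounded_add_summand[of H x y] False VfD_Vf[OF x] by (auto simp: Vf_def)
    then show ?thesis
      using VfD_unbounded_dom[OF xy] \<open>fdom x = UNIV\<close> by simp
  next
    case False
    then show ?thesis
      using defined \<open>\<not> form_bounded H y\<close> VfD_unbounded_dom[OF x] by simp
  qed
  then show ?thesis
    using VfD_I[OF y] by blast
qed (use VfD_I[OF y] in blast)

lemma VfD_sub_gea: "sub_gea (Vf H) (Vf_oplus H) zero_form (VfD H D)"
  unfolding sub_gea_def
proof (intro conjI ballI impI)
  show "VfD H D \<subseteq> Vf H"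
    using VfD_Vf by blast
  show "zero_form \<in> VfD H D"
    using VfD_I zero_form_in_Vf by blast
  fix x y w
  assume V: "x \<in> Vf H" "y \<in> Vf H" "w \<in> Vf H" and "Vf_oplus H x y = Some w"
    and two: "x \<in> VfD H D \<and> y \<in> VfD H D \<or> x \<in> VfD H D \<and> w \<in> VfD H D \<or> y \<in> VfD H D \<and> w \<in> VfD H D"
  then have defined: "form_bounded H x \<or> form_bounded H y \<or> fdom x = fdom y"
    and w: "w = form_add x y" "w = form_add y x"
    by (auto simp: Vf_oplus_eq_Some form_add_commute)
  have "x \<in> VfD H D \<and> y \<in> VfD H D \<and> w \<in> VfD H D"
    using two
  proof (elim disjE conjE)
    assume "x \<in> VfD H D" "y \<in> VfD H D"
    then show ?thesis
      using form_add_in_VfD V(3) w(1) by blast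
  next
    assume "x \<in> VfD H D" "w \<in> VfD H D"
    then show ?thesis
      using VfD_summand[OF _ V(2) defined] w(1) by blast
  next
    assume "y \<in> VfD H D" "w \<in> VfD H D"
    moreover have "form_bounded H y \<or> form_bounded H x \<or> fdom y = fdom x"
      using defined by blast
    ultimately show ?thesis
      using VfD_summand[OF _ V(1)] w(2) by blast
  qed
  then show "x \<in> VfD H D" "y \<in> VfD H D" "w \<in> VfD H D"
    by blast+
qed

lemma VfD_oplus_total: "op_total (VfD H D) oplusD"
  unfolding op_total_def
proof (intro ballI)
  fix x y
  assume x: "x \<in> VfD H D" and y: "y \<in> VfD H D"
  then have defined: "form_bounded H x \<or> form_bounded H y \<or> fdom x = fdom y"
    using VfD_unbounded_dom by metis
  then have "form_add x y \<in> VfD H D"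
    using form_add_in_VfD[OF x y] form_add_in_Vf[OF VfD_Vf[OF x] VfD_Vf[OF y]] by blast
  then show "oplusD x y \<noteq> None"
    using defined by (simp add: oplusD_eq_Some Vf_oplus_eq_Some)
qed

lemma VfD_representative:
  assumes "is_form H l" "form_positive l" "fdom l = D"
  obtains s where "s \<in> VfD H D" "\<And>v. v \<in> D \<Longrightarrow> fval s v v = fval l v v"
proof (cases "form_bounded H l")
  case True
  then obtain s where "s \<in> Vf H" "form_bounded H s" "\<And>v. v \<in> D \<Longrightarrow> fval s v v = fval l v v"
    using bounded_form_extension[OF assms(1,2)] assms(3) by metis
  then show ?thesis
    using that VfD_I by blast
next
  case False
  then have "l \<in> VfD H D"
    using assms by (simp add: VfD_def Vf_def)
  then show ?thesis
    using that by blast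
qed

lemma VfD_is_sup:
  assumes X: "\<And>n. X n \<in> VfD H D" and s: "s \<in> VfD H D"
    and inc: "\<And>v. v \<in> D \<Longrightarrow> incseq (\<lambda>n. Re (fval (X n) v v))"
    and lim: "\<And>v. v \<in> D \<Longrightarrow> (\<lambda>n. Re (fval (X n) v v)) \<longlonglongrightarrow> Re (fval s v v)"
  shows "is_sup_in (VfD H D) oplusD X s"
  unfolding is_sup_in_def
proof (intro conjI allI ballI impI s)
  show "gea_le (VfD H D) oplusD (X n) s" for n
    using incseq_le[OF inc lim] by (simp add: VfD_le_iff[OF X s])
  show "gea_le (VfD H D) oplusD s w" if "w \<in> VfD H D" "\<forall>n. gea_le (VfD H D) oplusD (X n) w" for w
    using that LIMSEQ_le_const2[OF lim] by (auto simp: VfD_le_iff[OF X] VfD_le_iff[OF s])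
qed

lemma VfD_is_inf:
  assumes X: "\<And>n. X n \<in> VfD H D" and s: "s \<in> VfD H D"
    and dec: "\<And>v. v \<in> D \<Longrightarrow> decseq (\<lambda>n. Re (fval (X n) v v))"
    and lim: "\<And>v. v \<in> D \<Longrightarrow> (\<lambda>n. Re (fval (X n) v v)) \<longlonglongrightarrow> Re (fval s v v)"
  shows "is_inf_in (VfD H D) oplusD X s"
  unfolding is_inf_in_def
proof (intro conjI allI ballI impI s)
  show "gea_le (VfD H D) oplusD s (X n)" for n
    using decseq_ge[OF dec lim] by (simp add: VfD_le_iff[OF s X])
  show "gea_le (VfD H D) oplusD w s" if "w \<in> VfD H D" "\<forall>n. gea_le (VfD H D) oplusD w (X n)" for w
    using that LIMSEQ_le_const[OF lim] by (auto simp: VfD_le_iff[OF _ X] VfD_le_iff[OF _ s])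
qed

lemma VfD_limit_representative:
  assumes X: "\<And>n. X n \<in> VfD H D"
    and conv: "\<And>v. v \<in> D \<Longrightarrow> convergent (\<lambda>n. Re (fval (X n) v v))"
  obtains s where "s \<in> VfD H D"
    "\<And>v. v \<in> D \<Longrightarrow> (\<lambda>n. Re (fval (X n) v v)) \<longlonglongrightarrow> Re (fval s v v)"
proof -
  note l = pointwise_limit_form[OF D VfD_Vf[OF X] VfD_dom[OF X] conv]
  obtain s where "s \<in> VfD H D" "\<And>v. v \<in> D \<Longrightarrow> fval s v v = fval (limit_form X D) v v"
    using VfD_representative[OF l(1-3)] by blast
  then show ?thesis
    using that l(4) by simp
qed

lemma VfD_up_complete: "monotone_dedekind_up_sigma_complete (VfD H D) oplusD"
  unfolding monotone_dedekind_up_sigma_complete_def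
proof (intro allI impI, elim conjE bexE)
  fix X u
  assume X: "\<forall>n. X n \<in> VfD H D" and "\<forall>n. gea_le (VfD H D) oplusD (X n) (X (Suc n))"
    and u: "u \<in> VfD H D" "\<forall>n. gea_le (VfD H D) oplusD (X n) u"
  then have inc: "incseq (\<lambda>n. Re (fval (X n) v v))" and bdd: "Re (fval (X n) v v) \<le> Re (fval u v v)"
    if "v \<in> D" for v n
    using that by (auto intro: incseq_SucI simp: VfD_le_iff)
  then have "convergent (\<lambda>n. Re (fval (X n) v v))" if "v \<in> D" for v
    using that incseq_convergent[of _ "Re (fval u v v)"] by (metis convergent_def)
  then obtain s where "s \<in> VfD H D" "\<And>v. v \<in> D \<Longrightarrow> (\<lambda>n. Re (fval (X n) v v)) \<longlonglongrightarrow> Re (fval s v v)"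
    using VfD_limit_representative X by metis
  then show "\<exists>s. is_sup_in (VfD H D) oplusD X s"
    using VfD_is_sup X inc by blast
qed

lemma VfD_down_complete: "monotone_dedekind_down_sigma_complete (VfD H D) oplusD"
  unfolding monotone_dedekind_down_sigma_complete_def
proof (intro allI impI, elim conjE)
  fix X
  assume X: "\<forall>n. X n \<in> VfD H D" and "\<forall>n. gea_le (VfD H D) oplusD (X (Suc n)) (X n)"
  then have dec: "decseq (\<lambda>n. Re (fval (X n) v v))" if "v \<in> D" for v
    using that by (auto intro: decseq_SucI simp: VfD_le_iff)
  have "0 \<le> Re (fval (X n) v v)" for n v
    using X VfD_Vf form_positive_Re_nonneg[of H "X n"] by (simp add: Vf_def)
  then have "convergent (\<lambda>n. Re (fval (X n) v v))" if "v \<in> D" for v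
    using that dec decseq_convergent[of _ 0] by (metis convergent_def)
  then obtain s where "s \<in> VfD H D" "\<And>v. v \<in> D \<Longrightarrow> (\<lambda>n. Re (fval (X n) v v)) \<longlonglongrightarrow> Re (fval s v v)"
    using VfD_limit_representative X by metis
  then show "\<exists>s. is_inf_in (VfD H D) oplusD X s"
    using VfD_is_inf X dec by blast
qed

end

end

theorem theorem5p7:
  fixes H :: "('a::ab_group_add) chs" and D :: "'a set"
  assumes "complex_hilbert_space H"
    and "infinite_dimensional H"
    and "lin_subspace H D"
    and "dense_in H D"
  shows "sub_gea (Vf H) (Vf_oplus H) zero_form (VfD H D)
       \<and> op_total (VfD H D) (restrict_op (Vf_oplus H) (VfD H D))
       \<and> monotone_dedekind_up_sigma_complete (VfD H D) (restrict_op (Vf_oplus H) (VfD H D))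
       \<and> monotone_dedekind_down_sigma_complete (VfD H D) (restrict_op (Vf_oplus H) (VfD H D))"
proof -
  interpret complex_inner_space H
    using assms(1) by (rule complex_hilbert_space_imp_inner_space)
  show ?thesis
    using VfD_sub_gea VfD_oplus_total VfD_up_complete VfD_down_complete assms(3,4) by blast
qed

end
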